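(* Let $a,c,b_1,\dots,b_n,d_1,\dots,d_n\in\mathbb R$ and let $\Phi:(\mathbb R\times\mathbb R^n,(0,0))\to(\mathbb R^2\times\mathbb R^n,(0,0))$ be $$\Phi(x,y)=\Big(ax^4+x^2\sum_{i=1}^n b_iy_i,\ cx^3+x\sum_{i=1}^n d_iy_i,\ y\Big),\quad y=(y_1,\dots,y_n).$$ Then $\Phi$ is $\mathcal A$-equivalent to $(x,y)\mapsto(3x^4+x^2y_1,-4x^3-2xy_1,y)$ (i.e. is a (swallowtail)$\times\mathbb R^{n-1}$) if and only if $2ad_i=3b_ic$ for every $i=1,\dots,n$ and there exists $i$ with $ab_icd_i\neq0$.
   Context: $\mathcal A$-equivalence of map-germs: $f=h_t\circ g\circ h_s$ for diffeomorphism germs $h_s,h_t$ of source and target. *)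

theory Defs
  imports "HOL-Analysis.Analysis"
begin

text \<open>C-infinity smoothness on a set U: there is a family of higher derivatives
  D k x [v1,...,vk] (the k-th derivative at x applied to v1..vk) such that D 0 = f on U
  and, for every k and every fixed list of directions of length k, the map
  y \<mapsto> D k y vs is (Frechet) differentiable at every point of U with derivative
  v \<mapsto> D (k+1) x (v # vs).  For finite-dimensional domains this is exactly C-infinity.\<close>
definition smooth_on :: "'a::euclidean_space set \<Rightarrow> ('a \<Rightarrow> 'b::real_normed_vector) \<Rightarrow> bool" where
  "smooth_on U f \<longleftrightarrow>
     (\<exists>D :: nat \<Rightarrow> 'a \<Rightarrow> 'a list \<Rightarrow> 'b.
        (\<forall>x\<in>U. D 0 x [] = f x) \<and>
        (\<forall>k vs x. length vs = k \<and> x \<in> U \<longrightarrow>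
            ((\<lambda>y. D k y vs) has_derivative (\<lambda>v. D (Suc k) x (v # vs))) (at x)))"

definition diffeo_germ :: "('a::euclidean_space \<Rightarrow> 'a) \<Rightarrow> bool" where
  "diffeo_germ h \<longleftrightarrow> h 0 = 0 \<and>
     (\<exists>U V g. open U \<and> open V \<and> 0 \<in> U \<and> h ` U = V \<and>
        smooth_on U h \<and> smooth_on V g \<and>
        (\<forall>x\<in>U. g (h x) = x) \<and> (\<forall>y\<in>V. h (g y) = y))"

definition A_equivalent :: "('a::euclidean_space \<Rightarrow> 'b::euclidean_space) \<Rightarrow> ('a \<Rightarrow> 'b) \<Rightarrow> bool" where
  "A_equivalent f g \<longleftrightarrow>
     (\<exists>hs ht. diffeo_germ hs \<and> diffeo_germ ht \<and>
        (\<forall>\<^sub>F x in nhds 0. f x = ht (g (hs x))))"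

end

theory Submission
  imports Defs
begin

text \<open>
  Sufficiency is explicit: under 2 a d = 3 c b with a b_i c d_i \<noteq> 0, a linear change of
  coordinates in the source (the coordinate y_i0 becomes 3 (b\<bullet>y) / a) and a linear rescaling
  in the target carry the swallowtail onto Phi; linear isomorphisms are diffeomorphism germs.

  Necessity uses invariants of A-equivalence.  If Phi = ht \<circ> G \<circ> hs near 0, then hs maps
  fibres of Phi onto fibres of G and points where the derivative is degenerate (has a
  nontrivial kernel) onto such points.  The swallowtail G is not injective near 0, its
  double points form the thin set {Y = -2x^2}, none of them is a degenerate point, and its
  degenerate points form the hypersurface {Y = -6x^2}, whose tangent cone at 0 is a hyperplane.
  Comparing these properties with Phi shows successively that d \<noteq> 0, that b = k d for some k,
  that 2a = 3ck and finally that a \<noteq> 0, which together give the stated condition.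
\<close>


definition Phi :: "real \<Rightarrow> real \<Rightarrow> real^'n \<Rightarrow> real^'n \<Rightarrow> real \<times> (real^'n) \<Rightarrow> real \<times> real \<times> (real^'n)" where
  "Phi a c b d p =
     (a * fst p ^ 4 + fst p ^ 2 * (b \<bullet> snd p), c * fst p ^ 3 + fst p * (d \<bullet> snd p), snd p)"

definition dPhi :: "real \<Rightarrow> real \<Rightarrow> real^'n \<Rightarrow> real^'n \<Rightarrow> real \<times> (real^'n) \<Rightarrow>
    real \<times> (real^'n) \<Rightarrow> real \<times> real \<times> (real^'n)" where
  "dPhi a c b d p v =
     ((4 * a * fst p ^ 3 + 2 * fst p * (b \<bullet> snd p)) * fst v + fst p ^ 2 * (b \<bullet> snd v),
      (3 * c * fst p ^ 2 + d \<bullet> snd p) * fst v + fst p * (d \<bullet> snd v), snd v)"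

definition swallowtail :: "'n \<Rightarrow> real \<times> (real^'n) \<Rightarrow> real \<times> real \<times> (real^'n)" where
  "swallowtail i0 = Phi 3 (-4) (axis i0 1) (axis i0 (-2))"

definition dswallowtail :: "'n \<Rightarrow> real \<times> (real^'n) \<Rightarrow> real \<times> (real^'n) \<Rightarrow> real \<times> real \<times> (real^'n)" where
  "dswallowtail i0 = dPhi 3 (-4) (axis i0 1) (axis i0 (-2))"

lemma Phi_has_derivative: "(Phi a c b d has_derivative dPhi a c b d p) (at p)"
proof -
  have "((\<lambda>p. Phi a c b d p) has_derivative (\<lambda>v. dPhi a c b d p v)) (at p)"
    unfolding Phi_def dPhi_def
    by (rule derivative_eq_intros refl | simp)+
       (auto simp: algebra_simps inner_commute power2_eq_square power3_eq_cube eval_nat_numeral)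
  then show ?thesis by simp
qed

lemma Phi_continuous: "continuous_on UNIV (Phi a c b d)"
  by (rule continuous_at_imp_continuous_on) (use Phi_has_derivative has_derivative_continuous in blast)

lemma Phi_zero: "Phi a c b d 0 = 0"
  by (simp add: Phi_def zero_prod_def)

lemma inner_axis_left: "axis i (k::real) \<bullet> y = k * y $ i"
  by (simp add: inner_axis')


definition degenerate :: "('a::real_vector \<Rightarrow> 'b::real_vector) \<Rightarrow> bool" where
  "degenerate L \<longleftrightarrow> (\<exists>v. v \<noteq> 0 \<and> L v = 0)"

text \<open>Composing with isomorphisms on both sides does not change degeneracy; this is why
  A-equivalence preserves singular points.\<close>

lemma degenerate_comp_iso:
  fixes Ds :: "'a::euclidean_space \<Rightarrow> 'a"
  assumes "linear Dt" "inj Dt" "linear Ds" "inj Ds"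
  shows "degenerate (\<lambda>v. Dt (L (Ds v))) \<longleftrightarrow> degenerate L"
proof
  assume "degenerate (\<lambda>v. Dt (L (Ds v)))"
  then obtain v where v: "v \<noteq> 0" "Dt (L (Ds v)) = 0" unfolding degenerate_def by blast
  have "L (Ds v) = 0" using v(2) assms(1,2) by (metis linear_0 injD)
  moreover have "Ds v \<noteq> 0" using v(1) assms(3,4) by (metis linear_0 injD)
  ultimately show "degenerate L" unfolding degenerate_def by blast
next
  assume "degenerate L"
  then obtain u where u: "u \<noteq> 0" "L u = 0" unfolding degenerate_def by blast
  obtain v where v: "u = Ds v" using linear_inj_imp_surj[OF assms(3,4)] by (metis surjD)
  have "v \<noteq> 0" using u(1) v assms(3) linear_0 by auto
  moreover have "Dt (L (Ds v)) = 0" using u v assms(1) linear_0 by simp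
  ultimately show "degenerate (\<lambda>v. Dt (L (Ds v)))" unfolding degenerate_def by blast
qed

lemma degenerate_dPhi:
  "degenerate (dPhi a c b d p) \<longleftrightarrow>
     4 * a * fst p ^ 3 + 2 * fst p * (b \<bullet> snd p) = 0 \<and> 3 * c * fst p ^ 2 + d \<bullet> snd p = 0"
proof
  assume "degenerate (dPhi a c b d p)"
  then obtain v where v: "v \<noteq> 0" "dPhi a c b d p v = 0" unfolding degenerate_def by blast
  have sv: "snd v = 0" using v(2) unfolding dPhi_def by (simp add: zero_prod_def)
  then have "fst v \<noteq> 0" using v(1) by (metis prod.collapse zero_prod_def)
  moreover have "(4 * a * fst p ^ 3 + 2 * fst p * (b \<bullet> snd p)) * fst v = 0"
    "(3 * c * fst p ^ 2 + d \<bullet> snd p) * fst v = 0"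
    using v(2) sv unfolding dPhi_def by (simp_all add: zero_prod_def)
  ultimately show "4 * a * fst p ^ 3 + 2 * fst p * (b \<bullet> snd p) = 0 \<and> 3 * c * fst p ^ 2 + d \<bullet> snd p = 0"
    by simp
next
  assume "4 * a * fst p ^ 3 + 2 * fst p * (b \<bullet> snd p) = 0 \<and> 3 * c * fst p ^ 2 + d \<bullet> snd p = 0"
  then have "dPhi a c b d p (1, 0) = 0" unfolding dPhi_def by (simp add: zero_prod_def)
  then show "degenerate (dPhi a c b d p)"
    unfolding degenerate_def by (intro exI[of _ "(1, 0)"]) (simp add: zero_prod_def)
qed


lemma degenerate_dswallowtail: "degenerate (dswallowtail i0 p) \<longleftrightarrow> snd p $ i0 = -6 * fst p ^ 2"
proof -
  have "degenerate (dswallowtail i0 p) \<longleftrightarrow>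
      12 * fst p ^ 3 + 2 * fst p * (snd p $ i0) = 0 \<and> -12 * fst p ^ 2 - 2 * snd p $ i0 = 0"
    unfolding dswallowtail_def degenerate_dPhi inner_axis_left by simp
  also have "\<dots> \<longleftrightarrow> snd p $ i0 = -6 * fst p ^ 2"
    by (auto simp: algebra_simps power3_eq_cube power2_eq_square)
  finally show ?thesis .
qed

lemma swallowtail_double_point:
  assumes "swallowtail i0 p = swallowtail i0 q" "p \<noteq> q"
  shows "snd q = snd p \<and> fst q = - fst p \<and> fst p \<noteq> 0 \<and> snd p $ i0 = -2 * fst p ^ 2"
proof -
  obtain x y where p: "p = (x, y)" by (cases p)
  obtain x' y' where q: "q = (x', y')" by (cases q)
  have yy: "y' = y" using assms(1) unfolding p q swallowtail_def Phi_def by simp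
  let ?Y = "y $ i0"
  have e1: "3 * x ^ 4 + x ^ 2 * ?Y = 3 * x' ^ 4 + x' ^ 2 * ?Y"
    and e2: "-4 * x ^ 3 + x * (-2 * ?Y) = -4 * x' ^ 3 + x' * (-2 * ?Y)"
    using assms(1) unfolding p q swallowtail_def Phi_def inner_axis_left yy by simp_all
  have xx: "x \<noteq> x'" using assms(2) p q yy by simp
  have "(x - x') * (2 * (x ^ 2 + x * x' + x' ^ 2) + ?Y) = 0"
    using e2 by (simp add: algebra_simps power2_eq_square power3_eq_cube)
  then have Y: "?Y = -2 * (x ^ 2 + x * x' + x' ^ 2)" using xx by simp
  have "(x ^ 2 - x' ^ 2) * (3 * x ^ 2 + 3 * x' ^ 2 + ?Y) = 0"
    using e1 by (simp add: algebra_simps power2_eq_square power3_eq_cube eval_nat_numeral)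
  then have "(x ^ 2 - x' ^ 2) * ((x - x') ^ 2) = 0"
    unfolding Y by (simp add: algebra_simps power2_eq_square)
  then have "x ^ 2 = x' ^ 2" using xx by simp
  then have x': "x' = -x" using xx by (metis power2_eq_iff)
  show ?thesis using Y x' xx p q yy by (auto simp: power2_eq_square)
qed

lemma swallowtail_double_point_regular:
  assumes "swallowtail i0 p = swallowtail i0 q" "p \<noteq> q"
  shows "\<not> degenerate (dswallowtail i0 p)"
  using swallowtail_double_point[OF assms] degenerate_dswallowtail[of i0 p]
  by (auto simp: power2_eq_square)


lemma smooth_on_has_derivative:
  assumes "smooth_on U h" "open U" "x \<in> U"
  shows "\<exists>D. (h has_derivative D) (at x)"
proof -
  obtain D where D0: "\<forall>x\<in>U. D 0 x [] = h x"
    and DS: "\<forall>k vs x. length vs = k \<and> x \<in> U \<longrightarrow>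
            ((\<lambda>y. D k y vs) has_derivative (\<lambda>v. D (Suc k) x (v # vs))) (at x)"
    using assms(1) unfolding smooth_on_def by blast
  have "((\<lambda>y. D 0 y []) has_derivative (\<lambda>v. D (Suc 0) x [v])) (at x)"
    using DS[rule_format, of "[]" 0 x] assms(3) by simp
  then have "(h has_derivative (\<lambda>v. D (Suc 0) x [v])) (at x)"
    by (rule has_derivative_transform_within_open[OF _ assms(2,3)]) (use D0 in auto)
  then show ?thesis by blast
qed

lemma left_inverse_derivative_inj:
  assumes "(h has_derivative Dh) (at x)" "(g has_derivative Dg) (at (h x))"
    "open U" "x \<in> U" "\<forall>x\<in>U. g (h x) = x"
  shows "inj Dh"
proof -
  have "((g \<circ> h) has_derivative (Dg \<circ> Dh)) (at x)"
    using diff_chain_at[OF assms(1,2)] .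
  then have "((\<lambda>x. x) has_derivative (Dg \<circ> Dh)) (at x)"
    by (rule has_derivative_transform_within_open[OF _ assms(3,4)]) (use assms(5) in auto)
  then have "Dg \<circ> Dh = (\<lambda>x. x)" using has_derivative_ident has_derivative_unique by blast
  then show ?thesis by (metis comp_apply injI)
qed

lemma diffeo_germ_local_inverse:
  assumes "diffeo_germ h"
  obtains U V g where "open U" "open V" "0 \<in> U" "h ` U = V" "h 0 = 0"
    "\<forall>x\<in>U. g (h x) = x" "\<forall>y\<in>V. h (g y) = y"
    "\<forall>x\<in>U. \<exists>D. (h has_derivative D) (at x) \<and> inj D"
    "\<forall>y\<in>V. \<exists>D. (g has_derivative D) (at y) \<and> inj D"
proof -
  obtain U V g where U: "open U" and V: "open V" and U0: "0 \<in> U" and img: "h ` U = V"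
    and h0: "h 0 = 0" and sh: "smooth_on U h" and sg: "smooth_on V g"
    and gh: "\<forall>x\<in>U. g (h x) = x" and hg: "\<forall>y\<in>V. h (g y) = y"
    using assms unfolding diffeo_germ_def by blast
  have hd: "\<exists>D. (h has_derivative D) (at x) \<and> inj D" if x: "x \<in> U" for x
  proof -
    obtain Dh where Dh: "(h has_derivative Dh) (at x)" using smooth_on_has_derivative[OF sh U x] ..
    have "h x \<in> V" using img x by blast
    then obtain Dg where "(g has_derivative Dg) (at (h x))" using smooth_on_has_derivative[OF sg V] by blast
    then show ?thesis using Dh left_inverse_derivative_inj[OF Dh _ U x gh] by blast
  qed
  have gd: "\<exists>D. (g has_derivative D) (at y) \<and> inj D" if y: "y \<in> V" for y
  proof -
    obtain Dg where Dg: "(g has_derivative Dg) (at y)" using smooth_on_has_derivative[OF sg V y] ..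
    have "g y \<in> U" using y gh img by force
    then obtain Dh where "(h has_derivative Dh) (at (g y))" using smooth_on_has_derivative[OF sh U] by blast
    then show ?thesis using Dg left_inverse_derivative_inj[OF Dg _ V y hg] by blast
  qed
  show ?thesis using that[OF U V U0 img h0 gh hg] hd gd by blast
qed

lemma A_equivalent_transfer:
  fixes f g :: "'a::euclidean_space \<Rightarrow> 'b::euclidean_space"
  assumes AE: "A_equivalent f g" and gc: "continuous_on UNIV g" and g0: "g 0 = 0"
    and fd: "\<And>p. (f has_derivative f' p) (at p)"
    and gd: "\<And>p. (g has_derivative g' p) (at p)"
  obtains N W \<phi> \<psi> M where "open N" "0 \<in> N" "open W" "0 \<in> W" "\<psi> 0 = 0"
    "\<forall>p\<in>N. \<phi> p \<in> W \<and> \<psi> (\<phi> p) = p" "\<forall>z\<in>W. \<psi> z \<in> N \<and> \<phi> (\<psi> z) = z"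
    "continuous_on W \<psi>" "(\<psi> has_derivative M) (at 0)" "linear M" "inj M"
    "\<forall>p\<in>N. \<forall>q\<in>N. f p = f q \<longleftrightarrow> g (\<phi> p) = g (\<phi> q)"
    "\<forall>p\<in>N. degenerate (f' p) \<longleftrightarrow> degenerate (g' (\<phi> p))"
proof -
  obtain hs ht where dhs: "diffeo_germ hs" and dht: "diffeo_germ ht"
    and ev: "\<forall>\<^sub>F x in nhds 0. f x = ht (g (hs x))"
    using AE unfolding A_equivalent_def by blast
  obtain Us Vs gs where Us: "open Us" and Vs: "open Vs" and U0: "0 \<in> Us" and img: "hs ` Us = Vs"
    and hs0: "hs 0 = 0" and gh: "\<forall>x\<in>Us. gs (hs x) = x" and hg: "\<forall>y\<in>Vs. hs (gs y) = y"
    and hsd: "\<forall>x\<in>Us. \<exists>D. (hs has_derivative D) (at x) \<and> inj D"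
    and gsd: "\<forall>y\<in>Vs. \<exists>D. (gs has_derivative D) (at y) \<and> inj D"
    by (rule diffeo_germ_local_inverse[OF dhs])
  obtain Ut Vt gt where Ut: "open Ut" and Ut0: "0 \<in> Ut" and ht0: "ht 0 = 0"
    and ght: "\<forall>x\<in>Ut. gt (ht x) = x"
    and htd: "\<forall>x\<in>Ut. \<exists>D. (ht has_derivative D) (at x) \<and> inj D"
    by (rule diffeo_germ_local_inverse[OF dht])
  obtain S0 where S0: "open S0" "0 \<in> S0" "\<forall>x\<in>S0. f x = ht (g (hs x))"
    using ev unfolding eventually_nhds by blast
  have hsc: "continuous_on Us hs"
    by (rule continuous_at_imp_continuous_on) (use hsd has_derivative_continuous in blast)
  have gsc: "continuous_on Vs gs"
    by (rule continuous_at_imp_continuous_on) (use gsd has_derivative_continuous in blast)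
  have "continuous_on Us (g \<circ> hs)"
    by (rule continuous_on_compose[OF hsc continuous_on_subset[OF gc subset_UNIV]])
  then have "open (Us \<inter> (g \<circ> hs) -` Ut)" using continuous_open_preimage Us Ut by blast
  define N where "N = S0 \<inter> (Us \<inter> (g \<circ> hs) -` Ut)"
  have oN: "open N" using \<open>open (Us \<inter> (g \<circ> hs) -` Ut)\<close> S0 N_def by auto
  have N0: "0 \<in> N" using S0 U0 Ut0 hs0 g0 N_def by auto
  define W where "W = Vs \<inter> gs -` N"
  have oW: "open W" using continuous_open_preimage[OF gsc Vs oN] W_def by simp
  have V0: "0 \<in> Vs" using img U0 hs0 by force
  have gs0: "gs 0 = 0" using gh U0 hs0 by force
  have W0: "0 \<in> W" using W_def V0 gs0 N0 by simp
  have NW: "\<forall>p\<in>N. hs p \<in> W \<and> gs (hs p) = p" using N_def W_def img gh by auto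
  have WN: "\<forall>z\<in>W. gs z \<in> N \<and> hs (gs z) = z" using W_def hg by auto
  have gsWc: "continuous_on W gs" using gsc W_def continuous_on_subset by blast
  obtain M where M: "(gs has_derivative M) (at 0)" "inj M" using gsd V0 by blast
  have linM: "linear M" using M has_derivative_linear by blast
  have fibres: "\<forall>p\<in>N. \<forall>q\<in>N. f p = f q \<longleftrightarrow> g (hs p) = g (hs q)"
    using S0(3) ght unfolding N_def by (metis IntE comp_apply vimageE)
  have singular: "\<forall>p\<in>N. degenerate (f' p) \<longleftrightarrow> degenerate (g' (hs p))"
  proof
    fix p assume p: "p \<in> N"
    obtain Ds where Ds: "(hs has_derivative Ds) (at p)" "inj Ds" using hsd p N_def by blast
    obtain Dt where Dt: "(ht has_derivative Dt) (at (g (hs p)))" "inj Dt"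
      using htd p N_def by auto
    have "((\<lambda>x. ht (g (hs x))) has_derivative (\<lambda>v. Dt (g' (hs p) (Ds v)))) (at p)"
      using diff_chain_at[OF diff_chain_at[OF Ds(1) gd]] Dt(1) by (simp add: o_def)
    then have "(f has_derivative (\<lambda>v. Dt (g' (hs p) (Ds v)))) (at p)"
      by (rule has_derivative_transform_within_open[OF _ oN p]) (use S0 N_def in auto)
    then have "f' p = (\<lambda>v. Dt (g' (hs p) (Ds v)))" by (rule has_derivative_unique[OF fd])
    then show "degenerate (f' p) \<longleftrightarrow> degenerate (g' (hs p))"
      using degenerate_comp_iso Ds Dt has_derivative_linear by metis
  qed
  show ?thesis
    by (rule that[OF oN N0 oW W0 gs0 NW WN gsWc M(1) linM M(2) fibres singular])
qed

lemma Phi_transfer: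
  assumes "A_equivalent (Phi a c b d) (swallowtail i0)"
  obtains N W \<phi> \<psi> M where "open N" "0 \<in> N" "open W" "0 \<in> W" "\<psi> 0 = 0"
    "\<forall>p\<in>N. \<phi> p \<in> W \<and> \<psi> (\<phi> p) = p" "\<forall>z\<in>W. \<psi> z \<in> N \<and> \<phi> (\<psi> z) = z"
    "continuous_on W \<psi>" "(\<psi> has_derivative M) (at 0)" "linear M" "inj M"
    "\<forall>p\<in>N. \<forall>q\<in>N. Phi a c b d p = Phi a c b d q \<longleftrightarrow> swallowtail i0 (\<phi> p) = swallowtail i0 (\<phi> q)"
    "\<forall>p\<in>N. degenerate (dPhi a c b d p) \<longleftrightarrow> degenerate (dswallowtail i0 (\<phi> p))"
proof -
  have "continuous_on UNIV (swallowtail i0)" "swallowtail i0 0 = 0"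
    "\<And>p. (swallowtail i0 has_derivative dswallowtail i0 p) (at p)"
    unfolding swallowtail_def dswallowtail_def by (rule Phi_continuous Phi_zero Phi_has_derivative)+
  then show ?thesis
    by (rule A_equivalent_transfer[OF assms _ _ Phi_has_derivative]) (rule that; assumption)
qed

lemma eventually_at_zero_nonzero: "\<forall>\<^sub>F t in at (0::real). t \<noteq> 0"
  by (simp add: eventually_at_filter)


text \<open>First obstruction: the swallowtail has pairs of points (t, -2t^2 e), (-t, -2t^2 e)
  with equal images arbitrarily close to 0, so a germ A-equivalent to it is not injective.\<close>

lemma not_A_equivalent_if_injective:
  fixes b d :: "real^'n"
  assumes inj: "inj (Phi a c b d)"
  shows "\<not> A_equivalent (Phi a c b d) (swallowtail i0)"
proof
  assume "A_equivalent (Phi a c b d) (swallowtail i0)"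
  then obtain N W \<phi> \<psi> where oW: "open W" and W0: "0 \<in> W"
    and WN: "\<forall>z\<in>W. \<psi> z \<in> N \<and> \<phi> (\<psi> z) = z"
    and fibres: "\<forall>p\<in>N. \<forall>q\<in>N. Phi a c b d p = Phi a c b d q \<longleftrightarrow> swallowtail i0 (\<phi> p) = swallowtail i0 (\<phi> q)"
    by (rule Phi_transfer) blast
  define pt :: "real \<Rightarrow> real \<times> (real^'n)" where "pt t = (t, (-2 * t ^ 2) *\<^sub>R axis i0 1)" for t
  define qt :: "real \<Rightarrow> real \<times> (real^'n)" where "qt t = (-t, (-2 * t ^ 2) *\<^sub>R axis i0 1)" for t
  have "(pt \<longlongrightarrow> pt 0) (at 0)" "(qt \<longlongrightarrow> qt 0) (at 0)"
    unfolding pt_def qt_def by (intro tendsto_intros)+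
  moreover have "pt 0 = 0" "qt 0 = 0" by (simp_all add: pt_def qt_def zero_prod_def)
  ultimately have "\<forall>\<^sub>F t in at 0. pt t \<in> W" "\<forall>\<^sub>F t in at 0. qt t \<in> W"
    using topological_tendstoD[OF _ oW W0] by metis+
  then have "\<forall>\<^sub>F t in at 0. pt t \<in> W \<and> qt t \<in> W \<and> t \<noteq> 0"
    using eventually_at_zero_nonzero by eventually_elim blast
  then obtain t where t: "pt t \<in> W" "qt t \<in> W" "t \<noteq> 0"
    using eventually_happens'[OF at_neq_bot] by blast
  have "swallowtail i0 (pt t) = swallowtail i0 (qt t)"
    unfolding swallowtail_def Phi_def pt_def qt_def inner_axis_left
    by (simp add: algebra_simps eval_nat_numeral)
  then have "Phi a c b d (\<psi> (pt t)) = Phi a c b d (\<psi> (qt t))" using fibres WN t by simp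
  then have "\<phi> (\<psi> (pt t)) = \<phi> (\<psi> (qt t))" using inj by (simp add: inj_eq)
  then have "pt t = qt t" using WN t by simp
  then show False using t unfolding pt_def qt_def by simp
qed

text \<open>Second obstruction: if Phi is even in x, every point near 0 off {x = 0} is a double
  point, so \<phi> maps an open set into the double-point surface Y = -2x^2 of the swallowtail,
  which contains no open set.\<close>

lemma not_A_equivalent_if_even:
  fixes b d :: "real^'n"
  assumes even: "\<And>x y. Phi a c b d (x, y) = Phi a c b d (-x, y)"
  shows "\<not> A_equivalent (Phi a c b d) (swallowtail i0)"
proof
  assume "A_equivalent (Phi a c b d) (swallowtail i0)"
  then obtain N W \<phi> \<psi> where oN: "open N" and N0: "0 \<in> N" and oW: "open W"
    and NW: "\<forall>p\<in>N. \<phi> p \<in> W \<and> \<psi> (\<phi> p) = p" and WN: "\<forall>z\<in>W. \<psi> z \<in> N \<and> \<phi> (\<psi> z) = z"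
    and \<psi>c: "continuous_on W \<psi>"
    and fibres: "\<forall>p\<in>N. \<forall>q\<in>N. Phi a c b d p = Phi a c b d q \<longleftrightarrow> swallowtail i0 (\<phi> p) = swallowtail i0 (\<phi> q)"
    by (rule Phi_transfer) blast
  obtain r where r: "r > 0" "ball 0 r \<subseteq> N" using oN N0 openE by blast
  define Ob where "Ob = ball 0 r \<inter> {p::real \<times> (real^'n). fst p \<noteq> 0}"
  have oOb: "open Ob" unfolding Ob_def
    by (intro open_Int open_ball open_Collect_neq continuous_intros)
  have double: "snd (\<phi> p) $ i0 = -2 * fst (\<phi> p) ^ 2" if p: "p \<in> Ob" for p
  proof -
    define p' where "p' = (- fst p, snd p)"
    have "norm p' = norm p" unfolding p'_def by (cases p) (simp add: norm_Pair)
    then have pN: "p \<in> N" and p'N: "p' \<in> N" using p r unfolding Ob_def by auto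
    have "p' \<noteq> p" using p unfolding Ob_def p'_def by (cases p) auto
    then have "\<phi> p \<noteq> \<phi> p'" using NW pN p'N by metis
    moreover have "swallowtail i0 (\<phi> p) = swallowtail i0 (\<phi> p')"
      using fibres pN p'N even[of "fst p" "snd p"] unfolding p'_def by simp
    ultimately show ?thesis using swallowtail_double_point by blast
  qed
  define Z where "Z = W \<inter> \<psi> -` Ob"
  have oZ: "open Z" unfolding Z_def by (rule continuous_open_preimage[OF \<psi>c oW oOb])
  have Z_double: "snd z $ i0 = -2 * fst z ^ 2" if "z \<in> Z" for z
    using double[of "\<psi> z"] that WN unfolding Z_def by auto
  have "(r/2, 0) \<in> Ob" using r unfolding Ob_def by (simp add: norm_Pair)
  moreover have "(r/2, 0) \<in> N" using calculation r unfolding Ob_def by auto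
  ultimately have "\<phi> (r/2, 0) \<in> Z" using NW unfolding Z_def by auto
  then obtain z0 where z0: "z0 \<in> Z" by blast
  obtain e where e: "e > 0" "ball z0 e \<subseteq> Z" using oZ z0 openE by blast
  define z1 where "z1 = z0 + (0, (e/2) *\<^sub>R axis i0 (1::real))"
  have "dist z0 z1 = e/2" unfolding z1_def dist_norm using e by (simp add: norm_Pair)
  then have "z1 \<in> Z" using e by auto
  then show False using Z_double[OF z0] Z_double[of z1] e unfolding z1_def by simp
qed

text \<open>Third obstruction: singular points of the swallowtail are never double points, so a
  germ A-equivalent to it has no colliding pairs p \<noteq> q with p singular accumulating at 0.\<close>

lemma not_A_equivalent_if_singular_collisions:
  fixes b d :: "real^'n" and p q :: "real \<Rightarrow> real \<times> (real^'n)"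
  assumes p: "(p \<longlongrightarrow> 0) (at 0)" and q: "(q \<longlongrightarrow> 0) (at 0)"
    and ev: "\<forall>\<^sub>F t in at 0. Phi a c b d (p t) = Phi a c b d (q t) \<and> p t \<noteq> q t \<and>
                            degenerate (dPhi a c b d (p t))"
  shows "\<not> A_equivalent (Phi a c b d) (swallowtail i0)"
proof
  assume "A_equivalent (Phi a c b d) (swallowtail i0)"
  then obtain N W \<phi> \<psi> where oN: "open N" and N0: "0 \<in> N"
    and NW: "\<forall>p\<in>N. \<phi> p \<in> W \<and> \<psi> (\<phi> p) = p"
    and fibres: "\<forall>p\<in>N. \<forall>q\<in>N. Phi a c b d p = Phi a c b d q \<longleftrightarrow> swallowtail i0 (\<phi> p) = swallowtail i0 (\<phi> q)"
    and singular: "\<forall>p\<in>N. degenerate (dPhi a c b d p) \<longleftrightarrow> degenerate (dswallowtail i0 (\<phi> p))"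
    by (rule Phi_transfer) blast
  have "\<forall>\<^sub>F t in at 0. p t \<in> N" "\<forall>\<^sub>F t in at 0. q t \<in> N"
    using topological_tendstoD[OF p oN N0] topological_tendstoD[OF q oN N0] .
  with ev have "\<forall>\<^sub>F t in at 0. p t \<in> N \<and> q t \<in> N \<and> Phi a c b d (p t) = Phi a c b d (q t) \<and>
      p t \<noteq> q t \<and> degenerate (dPhi a c b d (p t))"
    by eventually_elim blast
  then obtain t where t: "p t \<in> N" "q t \<in> N" "Phi a c b d (p t) = Phi a c b d (q t)" "p t \<noteq> q t"
    "degenerate (dPhi a c b d (p t))"
    using eventually_happens'[OF at_neq_bot] by blast
  have "swallowtail i0 (\<phi> (p t)) = swallowtail i0 (\<phi> (q t))" using fibres t by blast
  moreover have "\<phi> (p t) \<noteq> \<phi> (q t)" using NW t by metis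
  ultimately show False using swallowtail_double_point_regular singular t by blast
qed


lemma difference_quotient_tendsto:
  fixes F :: "real \<Rightarrow> 'a::real_normed_vector"
  assumes "(F has_derivative (\<lambda>t. t *\<^sub>R v)) (at 0)" "F 0 = 0"
  shows "((\<lambda>t. F t /\<^sub>R t) \<longlongrightarrow> v) (at 0)"
proof -
  have "((\<lambda>y. ((F y - F 0) - (y - 0) *\<^sub>R v) /\<^sub>R norm (y - 0)) \<longlongrightarrow> 0) (at 0)"
    using assms(1) unfolding has_derivative_at_within by blast
  then have "((\<lambda>y. norm (((F y - F 0) - (y - 0) *\<^sub>R v) /\<^sub>R norm (y - 0))) \<longlongrightarrow> 0) (at 0)"
    using tendsto_norm_zero by blast
  then have "((\<lambda>y. norm (F y /\<^sub>R y - v)) \<longlongrightarrow> 0) (at 0)"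
  proof (rule Lim_transform_eventually)
    show "\<forall>\<^sub>F y in at 0. norm (((F y - F 0) - (y - 0) *\<^sub>R v) /\<^sub>R norm (y - 0)) = norm (F y /\<^sub>R y - v)"
      using eventually_at_zero_nonzero
    proof (rule eventually_mono)
      fix y :: real assume y: "y \<noteq> 0"
      have "F y /\<^sub>R y - v = (F y - y *\<^sub>R v) /\<^sub>R y" using y by (simp add: algebra_simps)
      then show "norm (((F y - F 0) - (y - 0) *\<^sub>R v) /\<^sub>R norm (y - 0)) = norm (F y /\<^sub>R y - v)"
        using assms(2) by simp
    qed
  qed
  then show ?thesis by (simp add: tendsto_norm_zero_iff Lim_null[symmetric])
qed

lemma subspace_in_union:
  assumes "subspace X" "subspace A" "subspace B" "X \<subseteq> A \<union> B"
  shows "X \<subseteq> A \<or> X \<subseteq> B"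
proof (rule ccontr)
  assume "\<not> (X \<subseteq> A \<or> X \<subseteq> B)"
  then obtain u w where u: "u \<in> X" "u \<notin> A" and w: "w \<in> X" "w \<notin> B" by blast
  have uB: "u \<in> B" and wA: "w \<in> A" using u w assms(4) by blast+
  have "u + w \<in> A \<union> B" using assms(1,4) u w subspace_add by blast
  then show False
    using subspace_diff[OF assms(2) _ wA] subspace_diff[OF assms(3) _ uB] u w
    by (metis UnE add_diff_cancel add_diff_cancel_left')
qed

definition perp2 :: "'a::real_inner \<Rightarrow> 'a \<Rightarrow> 'a set" where
  "perp2 u v = {x. u \<bullet> x = 0 \<and> v \<bullet> x = 0}"

lemma subspace_perp2: "subspace (perp2 u v)"
proof -
  have "perp2 u v = {x. u \<bullet> x = 0} \<inter> {x. v \<bullet> x = 0}" unfolding perp2_def by blast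
  then show ?thesis by (simp add: real_vector.subspace_inter subspace_hyperplane)
qed

lemma dim_perp2_less:
  fixes u v w :: "'a::euclidean_space"
  assumes "u \<noteq> 0" "u \<bullet> w = 0" "v \<bullet> w \<noteq> 0"
  shows "dim (perp2 u v) < DIM('a) - 1"
proof -
  have "perp2 u v \<subset> {x. u \<bullet> x = 0}" using assms(2,3) unfolding perp2_def by blast
  then have "dim (perp2 u v) < dim {x. u \<bullet> x = 0}"
    using dim_psubset subspace_perp2 subspace_hyperplane by (metis span_eq_iff)
  then show ?thesis using dim_hyperplane[OF assms(1)] by simp
qed

text \<open>Fourth obstruction (tangent cone).  \<psi> maps the singular hypersurface Y = -6x^2 of the
  swallowtail into the singular set of Phi, so the tangent cone of the latter at 0 contains
  the hyperplane M(T), T = {Y = 0}.  Here the tangent cone is controlled by a closed set C: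
  every singular point p gives (t, p/t) \<in> C, and the limits (0, w) \<in> C lie in A \<union> B; if A and
  B are subspaces of dimension smaller than a hyperplane, A-equivalence is impossible.\<close>

lemma not_A_equivalent_if_thin_tangent_cone:
  fixes b d :: "real^'n" and A B :: "(real \<times> (real^'n)) set" and C :: "(real \<times> (real \<times> (real^'n))) set"
  assumes sA: "subspace A" and sB: "subspace B"
    and dA: "dim A < DIM(real \<times> (real^'n)) - 1" and dB: "dim B < DIM(real \<times> (real^'n)) - 1"
    and cC: "closed C" and inC: "\<And>t p. t \<noteq> 0 \<Longrightarrow> degenerate (dPhi a c b d p) \<Longrightarrow> (t, p /\<^sub>R t) \<in> C"
    and C0: "\<And>w. (0, w) \<in> C \<Longrightarrow> w \<in> A \<union> B"
  shows "\<not> A_equivalent (Phi a c b d) (swallowtail i0)"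
proof
  assume "A_equivalent (Phi a c b d) (swallowtail i0)"
  then obtain N W \<phi> \<psi> M where oW: "open W" and W0: "0 \<in> W" and \<psi>0: "\<psi> 0 = 0"
    and WN: "\<forall>z\<in>W. \<psi> z \<in> N \<and> \<phi> (\<psi> z) = z"
    and M: "(\<psi> has_derivative M) (at 0)" and linM: "linear M" and injM: "inj M"
    and singular: "\<forall>p\<in>N. degenerate (dPhi a c b d p) \<longleftrightarrow> degenerate (dswallowtail i0 (\<phi> p))"
    by (rule Phi_transfer) blast
  define T where "T = {v::real \<times> (real^'n). (0, axis i0 (1::real)) \<bullet> v = 0}"
  have M_tangent: "M v \<in> A \<union> B" if v: "v \<in> T" for v
  proof -
    have vY: "snd v $ i0 = 0" using v unfolding T_def by (cases v) (simp add: inner_axis_left)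
    text \<open>A curve in the singular hypersurface of the swallowtail with velocity v at 0.\<close>
    define \<gamma> :: "real \<Rightarrow> real \<times> (real^'n)" where
      "\<gamma> t = (t * fst v, t *\<^sub>R snd v + (-6 * t ^ 2 * (fst v) ^ 2) *\<^sub>R axis i0 1)" for t
    have \<gamma>0: "\<gamma> 0 = 0" unfolding \<gamma>_def by (simp add: zero_prod_def)
    have \<gamma>d: "(\<gamma> has_derivative (\<lambda>s. s *\<^sub>R v)) (at 0)"
    proof -
      have "((\<lambda>t. (t * fst v, t *\<^sub>R snd v + (-6 * t ^ 2 * (fst v) ^ 2) *\<^sub>R axis i0 (1::real)))
          has_derivative (\<lambda>s. (s * fst v, s *\<^sub>R snd v + (-6 * (2 * 0 * s) * (fst v) ^ 2) *\<^sub>R axis i0 1))) (at 0)"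
        by (rule derivative_eq_intros refl | simp)+
      then show ?thesis unfolding \<gamma>_def by (simp add: scaleR_prod_def)
    qed
    have "(\<gamma> \<longlongrightarrow> 0) (at 0)"
      using \<gamma>0 has_derivative_continuous[OF \<gamma>d] by (metis isCont_def)
    then have evW: "\<forall>\<^sub>F t in at 0. \<gamma> t \<in> W" by (rule topological_tendstoD[OF _ oW W0])
    have \<gamma>_singular: "degenerate (dPhi a c b d (\<psi> (\<gamma> t)))" if "\<gamma> t \<in> W" for t
    proof -
      have "degenerate (dswallowtail i0 (\<gamma> t))"
        unfolding degenerate_dswallowtail \<gamma>_def using vY by (simp add: power_mult_distrib)
      then show ?thesis using singular WN that by auto
    qed
    have "((\<psi> \<circ> \<gamma>) has_derivative (M \<circ> (\<lambda>s. s *\<^sub>R v))) (at 0)"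
      by (rule diff_chain_at[OF \<gamma>d]) (use M \<gamma>0 in simp)
    moreover have "M \<circ> (\<lambda>s. s *\<^sub>R v) = (\<lambda>s. s *\<^sub>R M v)"
      using linM by (simp add: o_def linear_cmul)
    ultimately have "((\<lambda>t. (\<psi> \<circ> \<gamma>) t /\<^sub>R t) \<longlongrightarrow> M v) (at 0)"
      using difference_quotient_tendsto \<gamma>0 \<psi>0 by (metis comp_apply)
    then have lim: "((\<lambda>t. (t, (\<psi> \<circ> \<gamma>) t /\<^sub>R t)) \<longlongrightarrow> (0, M v)) (at 0)"
      by (rule tendsto_Pair[OF tendsto_ident_at])
    have "\<forall>\<^sub>F t in at 0. (t, (\<psi> \<circ> \<gamma>) t /\<^sub>R t) \<in> C"
      using evW eventually_at_zero_nonzero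
      by eventually_elim (use inC \<gamma>_singular in auto)
    then have "(0, M v) \<in> C" by (rule Lim_in_closed_set[OF cC _ at_neq_bot lim])
    then show ?thesis using C0 by blast
  qed
  have sT: "subspace T" unfolding T_def by (rule subspace_hyperplane)
  have sMT: "subspace (M ` T)" by (rule real_vector.linear_subspace_image[OF linM sT])
  have "M ` T \<subseteq> A \<or> M ` T \<subseteq> B" using subspace_in_union[OF sMT sA sB] M_tangent by blast
  then have "dim (M ` T) \<le> dim A \<or> dim (M ` T) \<le> dim B" using dim_subset by blast
  moreover have "dim (M ` T) = dim T"
    using dim_image_eq[OF linM] injM by (meson inj_on_subset subset_UNIV)
  moreover have "dim T = DIM(real \<times> (real^'n)) - 1"
    unfolding T_def by (rule dim_hyperplane) (simp add: zero_prod_def axis_eq_0_iff)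
  ultimately show False using dA dB by linarith
qed

lemma dim_perp2_fold:
  fixes d :: "real^'n"
  assumes "d \<noteq> 0" shows "dim (perp2 (0, d) (1::real, 0)) < DIM(real \<times> (real^'n)) - 1"
  by (rule dim_perp2_less[where w="(1, 0)"]) (use assms in \<open>simp_all add: zero_prod_def\<close>)


text \<open>Necessity, step 1: d \<noteq> 0.  For d = 0, Phi is injective when c \<noteq> 0 and even in x
  when c = 0.\<close>

lemma A_equivalent_d_nonzero:
  assumes "A_equivalent (Phi a c b d) (swallowtail i0)"
  shows "d \<noteq> 0"
proof
  assume d: "d = 0"
  show False
  proof (cases "c = 0")
    case True
    then have "Phi a c b d (x, y) = Phi a c b d (-x, y)" for x y unfolding Phi_def d by simp
    then show False using not_A_equivalent_if_even assms by blast
  next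
    case False
    have "inj (Phi a c b d)"
    proof (rule injI)
      fix p q assume e: "Phi a c b d p = Phi a c b d q"
      then have "c * fst p ^ 3 = c * fst q ^ 3" using d unfolding Phi_def by simp
      then have "fst p = fst q" using False by (metis mult_cancel_left odd_real_root_power_cancel odd_numeral)
      moreover have "snd p = snd q" using e unfolding Phi_def by simp
      ultimately show "p = q" by (simp add: prod_eq_iff)
    qed
    then show False using not_A_equivalent_if_injective assms by blast
  qed
qed

text \<open>Necessity, step 2: b is a multiple of d.  Otherwise take y0 with d\<bullet>y0 = 0 and
  b\<bullet>y0 \<noteq> 0: the singular set of Phi is the union of {x = 0, d\<bullet>y = 0} and the set
  {b\<bullet>y = -2ax^2, d\<bullet>y = -3cx^2}, whose tangent cone lies in the codimension-2 subspace
  {d\<bullet>y = b\<bullet>y = 0}.\<close>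

lemma A_equivalent_parallel:
  fixes b d :: "real^'n"
  assumes AE: "A_equivalent (Phi a c b d) (swallowtail i0)"
  shows "\<exists>k. b = k *\<^sub>R d"
proof (rule ccontr)
  assume nonpar: "\<nexists>k. b = k *\<^sub>R d"
  have d: "d \<noteq> 0" using A_equivalent_d_nonzero[OF AE] .
  have "\<exists>y0. d \<bullet> y0 = 0 \<and> b \<bullet> y0 \<noteq> 0"
  proof (rule ccontr)
    assume no_y0: "\<nexists>y0. d \<bullet> y0 = 0 \<and> b \<bullet> y0 \<noteq> 0"
    define k where "k = (b \<bullet> d) / (d \<bullet> d)"
    define z where "z = b - k *\<^sub>R d"
    have dz: "d \<bullet> z = 0" unfolding z_def k_def using d by (simp add: inner_diff_right inner_commute)
    then have "b \<bullet> z = 0" using no_y0 by blast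
    moreover have "z \<bullet> z = b \<bullet> z - k * (d \<bullet> z)" unfolding z_def by (simp add: inner_diff_left)
    ultimately have "z = 0" using dz by simp
    then show False using nonpar unfolding z_def by simp
  qed
  then obtain y0 where y0: "d \<bullet> y0 = 0" "b \<bullet> y0 \<noteq> 0" by blast
  define B where "B = perp2 (0, d) (0::real, b)"
  have dB: "dim B < DIM(real \<times> (real^'n)) - 1"
    unfolding B_def by (rule dim_perp2_less[where w="(0, y0)"]) (use d y0 in \<open>simp_all add: zero_prod_def\<close>)
  define C where "C = ({z::real \<times> (real \<times> (real^'n)). fst (snd z) = 0} \<inter> {z. d \<bullet> snd (snd z) = 0}) \<union>
     ({z. b \<bullet> snd (snd z) = -2 * a * fst z * fst (snd z) ^ 2} \<inter>
      {z. d \<bullet> snd (snd z) = -3 * c * fst z * fst (snd z) ^ 2})"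
  have cC: "closed C" unfolding C_def
    by (intro closed_Un closed_Int closed_Collect_eq continuous_intros)
  have inC: "(t, p /\<^sub>R t) \<in> C" if t: "t \<noteq> 0" and s: "degenerate (dPhi a c b d p)" for t p
  proof -
    obtain x y where p: "p = (x, y)" by (cases p)
    have e: "4 * a * x ^ 3 + 2 * x * (b \<bullet> y) = 0" "3 * c * x ^ 2 + d \<bullet> y = 0"
      using s unfolding degenerate_dPhi p by simp_all
    show ?thesis
    proof (cases "x = 0")
      case True
      then show ?thesis using e p unfolding C_def by (simp add: inner_scaleR_right)
    next
      case False
      have "2 * x * (2 * a * x ^ 2 + b \<bullet> y) = 0"
        using e(1) by (simp add: algebra_simps power2_eq_square power3_eq_cube)
      then have "b \<bullet> y = -2 * a * x ^ 2" using False by simp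
      then have "b \<bullet> (y /\<^sub>R t) = -2 * a * t * (x / t) ^ 2"
        using t by (simp add: inner_scaleR_right power2_eq_square field_simps)
      moreover have "d \<bullet> (y /\<^sub>R t) = -3 * c * t * (x / t) ^ 2"
        using t e(2) by (simp add: inner_scaleR_right power2_eq_square field_simps)
      ultimately show ?thesis using p unfolding C_def by (simp add: divide_inverse ac_simps)
    qed
  qed
  have C0: "w \<in> perp2 (0, d) (1, 0) \<union> B" if "(0, w) \<in> C" for w
    using that unfolding C_def B_def perp2_def by (cases w) auto
  have sB: "subspace B" unfolding B_def by (rule subspace_perp2)
  show False
    using not_A_equivalent_if_thin_tangent_cone[OF subspace_perp2 sB dim_perp2_fold[OF d] dB cC inC C0] AE
    by blast
qed

text \<open>Necessity, step 3: if b = k d then 2a = 3ck.  Otherwise every singular point lies in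
  the codimension-2 subspace {x = 0, d\<bullet>y = 0}.\<close>

lemma A_equivalent_ratio:
  assumes AE: "A_equivalent (Phi a c b d) (swallowtail i0)" and bk: "b = k *\<^sub>R d"
  shows "2 * a = 3 * c * k"
proof (rule ccontr)
  assume ratio: "2 * a \<noteq> 3 * c * k"
  let ?A = "perp2 (0, d) (1::real, 0)"
  have d: "d \<noteq> 0" using A_equivalent_d_nonzero[OF AE] .
  have sing_in_A: "p \<in> ?A" if "degenerate (dPhi a c b d p)" for p
  proof -
    obtain x y where p: "p = (x, y)" by (cases p)
    have e: "4 * a * x ^ 3 + 2 * x * k * (d \<bullet> y) = 0" and m: "d \<bullet> y = -3 * c * x ^ 2"
      using that unfolding degenerate_dPhi p bk by (simp_all add: algebra_simps)
    have "x = 0"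
    proof (rule ccontr)
      assume "x \<noteq> 0"
      have "2 * x ^ 3 * (2 * a - 3 * c * k) = 0"
        using e unfolding m by (simp add: algebra_simps power2_eq_square power3_eq_cube)
      then show False using \<open>x \<noteq> 0\<close> ratio by simp
    qed
    then show ?thesis using m p unfolding perp2_def by simp
  qed
  have cone: "(t, p /\<^sub>R t) \<in> UNIV \<times> ?A" if "t \<noteq> 0" "degenerate (dPhi a c b d p)" for t p
    using subspace_scale[OF subspace_perp2 sing_in_A[OF that(2)]] by simp
  have "closed (UNIV \<times> ?A)" by (intro closed_Times closed_UNIV closed_subspace subspace_perp2)
  then show False
    using not_A_equivalent_if_thin_tangent_cone[OF subspace_perp2 subspace_perp2
        dim_perp2_fold[OF d] dim_perp2_fold[OF d] _ cone] AE
    by blast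
qed

text \<open>Necessity, step 4: a \<noteq> 0.  For a = 0 (hence b\<bullet>y = 0 whenever d\<bullet>y = -3cx^2), choose
  y0 with d\<bullet>y0 = 1; the singular points (t, -3ct^2 y0) and (-2t, -3ct^2 y0) have the same
  image.\<close>

lemma A_equivalent_a_nonzero:
  assumes AE: "A_equivalent (Phi a c b d) (swallowtail i0)"
    and bk: "b = k *\<^sub>R d" and ratio: "2 * a = 3 * c * k"
  shows "a \<noteq> 0"
proof
  assume a: "a = 0"
  have d: "d \<noteq> 0" using A_equivalent_d_nonzero[OF AE] .
  define y0 where "y0 = d /\<^sub>R (d \<bullet> d)"
  have dy0: "d \<bullet> y0 = 1" using d unfolding y0_def by (simp add: inner_scaleR_right)
  have ck: "c * k = 0" using a ratio by simp
  define p where "p t = (t, (-3 * c * t ^ 2) *\<^sub>R y0)" for t :: real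
  define q where "q t = (-2 * t, (-3 * c * t ^ 2) *\<^sub>R y0)" for t :: real
  have "(p \<longlongrightarrow> p 0) (at 0)" "(q \<longlongrightarrow> q 0) (at 0)"
    unfolding p_def q_def by (intro tendsto_intros)+
  moreover have "p 0 = 0" "q 0 = 0" by (simp_all add: p_def q_def zero_prod_def)
  ultimately have p0: "(p \<longlongrightarrow> 0) (at 0)" and q0: "(q \<longlongrightarrow> 0) (at 0)" by simp_all
  have "\<forall>\<^sub>F t in at 0. Phi a c b d (p t) = Phi a c b d (q t) \<and> p t \<noteq> q t \<and>
      degenerate (dPhi a c b d (p t))"
    using eventually_at_zero_nonzero
  proof eventually_elim
    case (elim t)
    have "b \<bullet> ((-3 * c * t ^ 2) *\<^sub>R y0) = 0" using ck unfolding bk by auto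
    then show ?case using elim a dy0 unfolding p_def q_def Phi_def degenerate_dPhi
      by (simp add: inner_scaleR_right algebra_simps eval_nat_numeral)
  qed
  then show False using not_A_equivalent_if_singular_collisions[OF p0 q0] AE by blast
qed

theorem necessity:
  assumes AE: "A_equivalent (Phi a c b d) (swallowtail i0)"
  shows "(\<forall>i. 2 * a * d $ i = 3 * b $ i * c) \<and> (\<exists>i. a * b $ i * c * d $ i \<noteq> 0)"
proof -
  obtain k where bk: "b = k *\<^sub>R d" using A_equivalent_parallel[OF AE] by blast
  have ratio: "2 * a = 3 * c * k" using A_equivalent_ratio[OF AE bk] .
  have "a \<noteq> 0" using A_equivalent_a_nonzero[OF AE bk ratio] .
  then have "c \<noteq> 0" "k \<noteq> 0" using ratio by auto
  obtain i where "d $ i \<noteq> 0" using A_equivalent_d_nonzero[OF AE] by (metis vec_eq_iff zero_index)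
  then have "a * b $ i * c * d $ i \<noteq> 0" using \<open>a \<noteq> 0\<close> \<open>c \<noteq> 0\<close> \<open>k \<noteq> 0\<close> bk by simp
  moreover have "2 * a * d $ i = 3 * b $ i * c" for i using ratio bk by simp
  ultimately show ?thesis by blast
qed


text \<open>Sufficiency.  Linear maps are smooth (derivatives of order \<ge> 2 vanish), so linear
  isomorphisms are diffeomorphism germs.\<close>

lemma linear_smooth_on:
  fixes L :: "'a::euclidean_space \<Rightarrow> 'b::euclidean_space"
  assumes "linear L" shows "smooth_on U L"
proof -
  have bl: "bounded_linear L" using assms linear_conv_bounded_linear by blast
  define D :: "nat \<Rightarrow> 'a \<Rightarrow> 'a list \<Rightarrow> 'b" where
    "D k x vs = (if k = 0 then L x else if k = 1 then L (hd vs) else 0)" for k x vs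
  have "((\<lambda>y. D k y vs) has_derivative (\<lambda>v. D (Suc k) x (v # vs))) (at x)" for k vs x
  proof (cases "k = 0")
    case True
    then show ?thesis unfolding D_def using bounded_linear.has_derivative[OF bl has_derivative_ident] by simp
  next
    case False
    then show ?thesis unfolding D_def by (simp add: has_derivative_const)
  qed
  then show ?thesis unfolding smooth_on_def by (intro exI[of _ D]) (simp add: D_def)
qed

lemma linear_iso_diffeo_germ:
  fixes L :: "'a::euclidean_space \<Rightarrow> 'a"
  assumes "linear L" "linear L'" "\<And>x. L' (L x) = x" "\<And>y. L (L' y) = y"
  shows "diffeo_germ L"
  unfolding diffeo_germ_def
proof (intro conjI exI[of _ UNIV] exI[of _ L'])
  show "L 0 = 0" using assms(1) by (rule linear_0)
  show "L ` UNIV = UNIV" using assms(4) by (metis surj_def)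
qed (use assms linear_smooth_on in auto)

text \<open>Any nonzero linear form can be made a coordinate function: there is a linear
  automorphism T of R^n with (T y)_i0 = \<beta>\<bullet>y.  (Replace the coordinate y_i0 by \<beta>\<bullet>y and move
  y_i0 to the place of a coordinate j with \<beta>_j \<noteq> 0.)\<close>

lemma linear_form_as_coordinate:
  fixes \<beta> :: "real^'n"
  assumes "\<beta> $ j \<noteq> 0"
  obtains T T' :: "real^'n \<Rightarrow> real^'n" where "linear T" "linear T'"
    "\<And>y. T' (T y) = y" "\<And>y. T (T' y) = y" "\<And>y. T y $ i0 = \<beta> \<bullet> y"
proof -
  define T :: "real^'n \<Rightarrow> real^'n" where
    "T y = (\<chi> i. if i = i0 then \<beta> \<bullet> y else if i = j then y $ i0 else y $ i)" for y
  have linT: "linear T"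
    by (rule linearI) (simp_all add: T_def vec_eq_iff inner_add_right algebra_simps)
  have "inj T"
    unfolding linear_injective_0[OF linT]
  proof (intro allI impI)
    fix y assume y: "T y = 0"
    have "y $ i = 0" if "i \<noteq> j" for i
      using y that vec_eq_iff[of "T y" 0] unfolding T_def
      by (cases "i = i0") (auto dest: spec[of _ j] spec[of _ i] split: if_splits)
    then have ya: "y = axis j (y $ j)" by (simp add: vec_eq_iff axis_def)
    have "\<beta> \<bullet> y = 0" using y vec_eq_iff[of "T y" 0] unfolding T_def by (auto dest: spec[of _ i0])
    then have "\<beta> $ j * y $ j = 0" using ya by (metis inner_axis inner_real_def)
    then show "y = 0" using ya assms by simp
  qed
  then obtain T' where "linear T'" "\<forall>x. T' (T x) = x" "\<forall>x. T (T' x) = x"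
    using linear_injective_isomorphism[OF linT] by blast
  then show ?thesis using that linT by (simp add: T_def)
qed

theorem sufficiency:
  fixes b d :: "real^'n"
  assumes proportional: "\<forall>i. 2 * a * d $ i = 3 * b $ i * c" and nz: "\<exists>i. a * b $ i * c * d $ i \<noteq> 0"
  shows "A_equivalent (Phi a c b d) (swallowtail i0)"
proof -
  obtain j where j: "a * b $ j * c * d $ j \<noteq> 0" using nz by blast
  have a: "a \<noteq> 0" and c: "c \<noteq> 0" using j by auto
  have d_b: "d \<bullet> y = (3 * c / (2 * a)) * (b \<bullet> y)" for y
  proof -
    have "d = (3 * c / (2 * a)) *\<^sub>R b" using proportional a by (simp add: vec_eq_iff field_simps)
    then show ?thesis by simp
  qed
  obtain T T' where linT: "linear T" and linT': "linear T'" and TT': "\<And>y. T' (T y) = y"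
    "\<And>y. T (T' y) = y" and Ti0: "\<And>y. T y $ i0 = ((3 / a) *\<^sub>R b) \<bullet> y"
    using linear_form_as_coordinate[of "(3 / a) *\<^sub>R b" j i0] j by auto
  define hs where "hs p = (fst p, T (snd p))" for p :: "real \<times> (real^'n)"
  define hs' where "hs' p = (fst p, T' (snd p))" for p :: "real \<times> (real^'n)"
  define ht where "ht z = ((a / 3) * fst z, (-c / 4) * fst (snd z), T' (snd (snd z)))"
    for z :: "real \<times> real \<times> (real^'n)"
  define ht' where "ht' z = ((3 / a) * fst z, (-4 / c) * fst (snd z), T (snd (snd z)))"
    for z :: "real \<times> real \<times> (real^'n)"
  have "diffeo_germ hs"
  proof (rule linear_iso_diffeo_germ[where L'=hs'])
    show "linear hs" unfolding hs_def
      by (rule linearI) (simp_all add: linear_add[OF linT] linear_cmul[OF linT])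
    show "linear hs'" unfolding hs'_def
      by (rule linearI) (simp_all add: linear_add[OF linT'] linear_cmul[OF linT'])
  qed (simp_all add: hs_def hs'_def TT')
  moreover have "diffeo_germ ht"
  proof (rule linear_iso_diffeo_germ[where L'=ht'])
    show "linear ht" unfolding ht_def
      by (rule linearI) (simp_all add: linear_add[OF linT'] linear_cmul[OF linT'] algebra_simps)
    show "linear ht'" unfolding ht'_def
      by (rule linearI) (simp_all add: linear_add[OF linT] linear_cmul[OF linT] algebra_simps add_divide_distrib)
  qed (simp_all add: ht_def ht'_def TT' a c)
  moreover have "Phi a c b d p = ht (swallowtail i0 (hs p))" for p
  proof -
    have "T (snd p) $ i0 = (3 / a) * (b \<bullet> snd p)" using Ti0 by simp
    then show ?thesis
      unfolding swallowtail_def Phi_def hs_def ht_def inner_axis_left fst_conv snd_conv d_b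
      using TT' a c by (simp add: field_simps)
  qed
  ultimately show ?thesis unfolding A_equivalent_def by (intro exI[of _ hs] exI[of _ ht]) auto
qed


theorem proposition6:
  fixes a c :: real and b d :: "real ^ 'n" and i0 :: 'n
  shows "A_equivalent
           (\<lambda>(x::real, y::real ^ 'n).
              (a * x ^ 4 + x ^ 2 * (\<Sum>i\<in>UNIV. b $ i * y $ i),
               c * x ^ 3 + x * (\<Sum>i\<in>UNIV. d $ i * y $ i), y))
           (\<lambda>(x::real, y::real ^ 'n).
              (3 * x ^ 4 + x ^ 2 * y $ i0, - 4 * x ^ 3 - 2 * x * y $ i0, y))
         \<longleftrightarrow> (\<forall>i. 2 * a * d $ i = 3 * b $ i * c) \<and> (\<exists>i. a * b $ i * c * d $ i \<noteq> 0)"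
proof -
  have family: "(\<lambda>(x::real, y::real ^ 'n).
              (a * x ^ 4 + x ^ 2 * (\<Sum>i\<in>UNIV. b $ i * y $ i),
               c * x ^ 3 + x * (\<Sum>i\<in>UNIV. d $ i * y $ i), y)) = Phi a c b d"
    by (rule ext) (auto simp: Phi_def inner_vec_def)
  have normal_form: "(\<lambda>(x::real, y::real ^ 'n).
              (3 * x ^ 4 + x ^ 2 * y $ i0, - 4 * x ^ 3 - 2 * x * y $ i0, y)) = swallowtail i0"
    by (rule ext) (auto simp: swallowtail_def Phi_def inner_axis_left)
  show ?thesis unfolding family normal_form using necessity sufficiency by blast
qed

end
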